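(* Let $\Omega:=\{(z_1,z_2)\in\mathbb{R}^2: z_1>0\}$ and define on $\Omega$ the vector fields \[ r_1(z_1,z_2)=\Big(\tfrac{z_2-\sqrt{z_2^2+4z_1}}{2},\,1\Big),\qquad r_2(z_1,z_2)=\Big(\tfrac{z_2+\sqrt{z_2^2+4z_1}}{2},\,1\Big). \] There exists a global diffeomorphism $w=(w_1,w_2):\Omega\to w(\Omega)\subset\mathbb{R}^2$ such that on $\Omega$, \[ \nabla w_i\cdot r_i=0\quad(i=1,2),\qquad \frac{\partial w_1}{\partial z_1}>0,\qquad \frac{\partial w_2}{\partial z_1}<0. \]
   Context: $r_1,r_2$ are the eigenvectors of the matrix $\begin{pmatrix} z_2 & z_1\\ 1 & 0\end{pmatrix}$ corresponding to the eigenvalues $\frac{z_2\mp\sqrt{z_2^2+4z_1}}{2}$. *)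

theory Defs
  imports "HOL-Analysis.Analysis"
begin

definition Omega :: "(real \<times> real) set" where
  "Omega = {z. fst z > 0}"

definition r1 :: "real \<times> real \<Rightarrow> real \<times> real" where
  "r1 z = ((snd z - sqrt ((snd z)^2 + 4 * fst z)) / 2, 1)"

definition r2 :: "real \<times> real \<Rightarrow> real \<times> real" where
  "r2 z = ((snd z + sqrt ((snd z)^2 + 4 * fst z)) / 2, 1)"

definition C1_map_on :: "('a::real_normed_vector) set \<Rightarrow> ('a \<Rightarrow> 'b::real_normed_vector) \<Rightarrow> bool" where
  "C1_map_on S f \<longleftrightarrow> (\<exists>f'. (\<forall>x\<in>S. (f has_derivative blinfun_apply (f' x)) (at x)) \<and> continuous_on S f')"

definition diffeomorphism_onto :: "('a::real_normed_vector) set \<Rightarrow> ('b::real_normed_vector) set \<Rightarrow> ('a \<Rightarrow> 'b) \<Rightarrow> bool" where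
  "diffeomorphism_onto S T f \<longleftrightarrow> open S \<and> open T \<and> bij_betw f S T \<and> C1_map_on S f \<and> C1_map_on T (inv_into S f)"

end

theory Submission
  imports Defs
begin

(*
  Write the eigenvalues as -a^2 < 0 < b^2 with a, b > 0. Then z = (a^2 b^2, b^2 - a^2), so
  (a, b) are global coordinates identifying Omega with the open quadrant, and r1 = (-a^2, 1),
  r2 = (b^2, 1). Take w(z) = (Im c, Re c) with c = (b + i a)^3: cubing maps the open first
  quadrant of the complex plane diffeomorphically onto the plane minus the closed fourth
  quadrant (the inverse is a rotated principal cube root), and the chain rule gives
  grad w1 = 3/(2a) (1, a^2) and grad w2 = 3/(2b) (-1, b^2), orthogonal to r1 and r2.
*)

section \<open>\<open>C\<^sup>1\<close> maps and diffeomorphisms\<close>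

lemma C1_map_onI:
  fixes f :: "'a::euclidean_space \<Rightarrow> 'b::real_normed_vector"
  assumes deriv: "\<And>x. x \<in> S \<Longrightarrow> (f has_derivative D x) (at x)"
    and cont: "\<And>i. i \<in> Basis \<Longrightarrow> continuous_on S (\<lambda>x. D x i)"
  shows "C1_map_on S f"
proof -
  have D_eq: "blinfun_apply (Blinfun (D x)) = D x" if "x \<in> S" for x
    using deriv[OF that] by (meson bounded_linear_Blinfun_apply has_derivative_bounded_linear)
  have "continuous_on S (\<lambda>x. Blinfun (D x))"
    by (rule continuous_on_blinfun_componentwise, rule continuous_on_eq[OF cont]) (auto simp: D_eq)
  then show ?thesis
    unfolding C1_map_on_def using deriv D_eq by (intro exI[of _ "\<lambda>x. Blinfun (D x)"]) auto
qed

lemma C1_map_on_cong: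
  assumes "open S" "\<And>x. x \<in> S \<Longrightarrow> f x = g x" "C1_map_on S f"
  shows "C1_map_on S g"
  using assms unfolding C1_map_on_def by (metis has_derivative_transform_within_open)

lemma C1_map_on_compose:
  assumes "C1_map_on S f" "C1_map_on T g" "f ` S \<subseteq> T"
  shows "C1_map_on S (g \<circ> f)"
proof -
  obtain f' where f': "\<forall>x\<in>S. (f has_derivative blinfun_apply (f' x)) (at x)"
    and cont_f': "continuous_on S f'"
    using assms(1) unfolding C1_map_on_def by blast
  obtain g' where g': "\<forall>y\<in>T. (g has_derivative blinfun_apply (g' y)) (at y)"
    and cont_g': "continuous_on T g'"
    using assms(2) unfolding C1_map_on_def by blast
  have "continuous_on S f"
    using f' by (meson continuous_at_imp_continuous_on has_derivative_continuous)
  then have "continuous_on S (g' \<circ> f)"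
    using continuous_on_compose continuous_on_subset[OF cont_g' assms(3)] by blast
  then have "continuous_on S (\<lambda>x. g' (f x) o\<^sub>L f' x)"
    using cont_f' by (auto intro!: continuous_intros simp: comp_def)
  moreover have "((g \<circ> f) has_derivative blinfun_apply (g' (f x) o\<^sub>L f' x)) (at x)" if "x \<in> S" for x
  proof -
    have "((g \<circ> f) has_derivative blinfun_apply (g' (f x)) \<circ> blinfun_apply (f' x)) (at x)"
      by (rule diff_chain_at) (use that assms(3) f' g' in auto)
    then show ?thesis
      by (simp add: comp_def blinfun_apply_blinfun_compose[abs_def])
  qed
  ultimately show ?thesis
    unfolding C1_map_on_def by (intro exI[of _ "\<lambda>x. g' (f x) o\<^sub>L f' x"]) blast
qed

lemma C1_map_on_bounded_linear:
  fixes f :: "'a::euclidean_space \<Rightarrow> 'b::real_normed_vector"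
  assumes "bounded_linear f"
  shows "C1_map_on S f"
  by (rule C1_map_onI[where D="\<lambda>_. f"]) (auto intro: bounded_linear_imp_has_derivative[OF assms])

lemma C1_map_on_field_derivative:
  fixes f :: "'a::{real_normed_field, euclidean_space} \<Rightarrow> 'a"
  assumes "\<And>x. x \<in> S \<Longrightarrow> (f has_field_derivative f' x) (at x)" "continuous_on S f'"
  shows "C1_map_on S f"
  using assms by (intro C1_map_onI[where D="\<lambda>x. (*) (f' x)"])
    (auto simp: has_field_derivative_def intro!: continuous_intros)

lemma diffeomorphism_ontoI:
  assumes "open S" "open T" "f ` S \<subseteq> T" "g ` T \<subseteq> S"
    and "\<And>x. x \<in> S \<Longrightarrow> g (f x) = x" "\<And>y. y \<in> T \<Longrightarrow> f (g y) = y"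
    and "C1_map_on S f" "C1_map_on T g"
  shows "diffeomorphism_onto S T f"
proof -
  have bij: "bij_betw f S T"
    by (rule bij_betw_byWitness[where f'=g]) (use assms in auto)
  then have "g y = inv_into S f y" if "y \<in> T" for y
    using assms that by (metis bij_betw_inv_into_left image_subset_iff)
  then have "C1_map_on T (inv_into S f)"
    using C1_map_on_cong assms by blast
  then show ?thesis
    unfolding diffeomorphism_onto_def using assms bij by blast
qed

lemma diffeomorphism_onto_compose:
  assumes f: "diffeomorphism_onto S T f" and g: "diffeomorphism_onto T U g"
  shows "diffeomorphism_onto S U (g \<circ> f)"
proof -
  have bf: "bij_betw f S T" and bg: "bij_betw g T U"
    using assms unfolding diffeomorphism_onto_def by auto
  show ?thesis
  proof (rule diffeomorphism_ontoI[where g="inv_into S f \<circ> inv_into T g"])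
    show "open S" "open U"
      using f g unfolding diffeomorphism_onto_def by auto
    show "(g \<circ> f) ` S \<subseteq> U" "(inv_into S f \<circ> inv_into T g) ` U \<subseteq> S"
      using bf bg by (auto simp: bij_betw_def inv_into_into)
    show "(inv_into S f \<circ> inv_into T g) ((g \<circ> f) x) = x" if "x \<in> S" for x
      using bf bg that by (auto simp: bij_betw_def)
    show "(g \<circ> f) ((inv_into S f \<circ> inv_into T g) y) = y" if "y \<in> U" for y
      using bf bg that by (auto simp: bij_betw_def f_inv_into_f inv_into_into)
    show "C1_map_on S (g \<circ> f)"
      using f g bf by (intro C1_map_on_compose) (auto simp: diffeomorphism_onto_def bij_betw_def)
    show "C1_map_on U (inv_into S f \<circ> inv_into T g)"
      using f g bg by (intro C1_map_on_compose) (auto simp: diffeomorphism_onto_def bij_betw_def inv_into_into)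
  qed
qed

lemma diffeomorphism_onto_image:
  assumes "diffeomorphism_onto S T f"
  shows "diffeomorphism_onto S (f ` S) f"
proof -
  have "f ` S = T"
    using assms by (simp add: diffeomorphism_onto_def bij_betw_def)
  with assms show ?thesis
    by simp
qed

section \<open>Cubing the first quadrant\<close>

definition first_quadrant :: "complex set" where
  "first_quadrant = {z. 0 < Re z \<and> 0 < Im z}"

definition three_quadrants :: "complex set" where
  "three_quadrants = {z. Re z < 0 \<or> 0 < Im z}"

text \<open>Rotating by \<open>-3\<pi>/4\<close> moves \<open>three_quadrants\<close> (the arguments in \<open>(0, 3\<pi>/2)\<close>) into
  the slit plane, where the principal cube root has arguments in \<open>(-\<pi>/4, \<pi>/4)\<close>; rotating back
  by \<open>\<pi>/4\<close> lands in the first quadrant.\<close>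
definition cube_root_three_quadrants :: "complex \<Rightarrow> complex" where
  "cube_root_three_quadrants z = cis (pi/4) * exp (Ln (cis (-3*pi/4) * z) / 3)"

lemma open_first_quadrant: "open first_quadrant"
  unfolding first_quadrant_def by (intro open_Collect_conj open_Collect_less continuous_intros)

lemma open_three_quadrants: "open three_quadrants"
  unfolding three_quadrants_def by (intro open_Collect_disj open_Collect_less continuous_intros)

lemma power3_first_quadrant:
  assumes "z \<in> first_quadrant"
  shows "z ^ 3 \<in> three_quadrants"
proof -
  obtain x y where z: "z = Complex x y" and pos: "0 < x" "0 < y"
    using assms by (cases z) (auto simp: first_quadrant_def)
  have "x^3 - 3*x*y^2 < 0 \<or> 0 < 3*x^2*y - y^3"
  proof (rule ccontr)
    assume "\<not> ?thesis"
    then have "3*y^2 \<le> x^2" "3*x^2 \<le> y^2"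
      using pos by (auto simp: power2_eq_square power3_eq_cube)
    then show False
      using pos by (smt (verit) zero_less_power)
  qed
  then show ?thesis
    by (simp add: three_quadrants_def z power3_eq_cube power2_eq_square algebra_simps)
qed

lemma three_quadrants_nonzero: "z \<in> three_quadrants \<Longrightarrow> z \<noteq> 0"
  by (auto simp: three_quadrants_def)

lemma rcis_notin_three_quadrants:
  assumes "0 \<le> r" "- (pi/2) \<le> t" "t \<le> 0"
  shows "rcis r t \<notin> three_quadrants"
proof -
  have "0 \<le> cos t" "sin t \<le> 0"
    using assms cos_ge_zero sin_ge_zero[of "- t"] by auto
  then have "0 \<le> r * cos t" "r * sin t \<le> 0"
    using assms(1) by (simp_all add: mult_nonneg_nonpos)
  then show ?thesis
    by (auto simp: three_quadrants_def)
qed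

lemma rcis_add_2pi: "rcis r (t + 2*pi) = rcis r t"
  by (simp add: complex_eq_iff)

lemma Im_Ln_rotated_three_quadrants:
  assumes "z \<in> three_quadrants"
  shows "\<bar>Im (Ln (cis (-3*pi/4) * z))\<bar> < 3*pi/4"
proof (rule ccontr)
  define L where "L = Ln (cis (-3*pi/4) * z)"
  assume "\<not> \<bar>Im L\<bar> < 3*pi/4"
  have "z \<noteq> 0"
    using assms by (rule three_quadrants_nonzero)
  then have L_range: "- pi < Im L" "Im L \<le> pi"
    by (simp_all add: L_def mpi_less_Im_Ln Im_Ln_le_pi)
  have "z = cis (3*pi/4) * exp L"
    using \<open>z \<noteq> 0\<close> by (simp add: L_def cis_mult)
  then have z: "z = rcis (exp (Re L)) (Im L + 3*pi/4)"
    by (simp add: exp_eq_polar rcis_def cis_mult algebra_simps)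
  \<comment> \<open>Up to a shift by \<open>2\<pi>\<close>, the argument of \<open>z\<close> would lie in \<open>[-\<pi>/2, 0]\<close>.\<close>
  show False
  proof (cases "Im L \<le> -(3*pi/4)")
    case True
    then show False
      using assms z L_range rcis_notin_three_quadrants[of "exp (Re L)" "Im L + 3*pi/4"] by auto
  next
    case False
    have "rcis (exp (Re L)) (Im L + 3*pi/4) = rcis (exp (Re L)) (Im L - 5*pi/4)"
      using rcis_add_2pi[of "exp (Re L)" "Im L - 5*pi/4"] by (simp add: algebra_simps)
    then show False
      using False \<open>\<not> \<bar>Im L\<bar> < 3*pi/4\<close> assms z L_range
        rcis_notin_three_quadrants[of "exp (Re L)" "Im L - 5*pi/4"] by auto
  qed
qed

lemma rotated_three_quadrants_notin_nonpos_Reals: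
  assumes "z \<in> three_quadrants"
  shows "cis (-3*pi/4) * z \<notin> \<real>\<^sub>\<le>\<^sub>0"
proof -
  define w where "w = cis (-3*pi/4) * z"
  have "w \<noteq> 0"
    using three_quadrants_nonzero[OF assms] by (simp add: w_def)
  moreover have "Im (Ln w) \<noteq> pi"
    using Im_Ln_rotated_three_quadrants[OF assms] by (auto simp: w_def)
  ultimately have "w \<notin> \<real>\<^sub>\<le>\<^sub>0"
    using Im_Ln_eq_pi[of w] by (auto simp: complex_nonpos_Reals_iff complex_eq_iff)
  then show ?thesis
    by (simp add: w_def)
qed

lemma cube_root_three_quadrants_in_first_quadrant:
  assumes "z \<in> three_quadrants"
  shows "cube_root_three_quadrants z \<in> first_quadrant"
proof -
  define L where "L = Ln (cis (-3*pi/4) * z)"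
  have "\<bar>Im L\<bar> < 3*pi/4"
    using Im_Ln_rotated_three_quadrants[OF assms] by (simp add: L_def)
  then have "0 < cos (pi/4 + Im L / 3)" "0 < sin (pi/4 + Im L / 3)"
    by (auto intro!: cos_gt_zero_pi sin_gt_zero)
  moreover have "cube_root_three_quadrants z = rcis (exp (Re L / 3)) (pi/4 + Im L / 3)"
    by (simp add: cube_root_three_quadrants_def L_def exp_eq_polar rcis_def cis_mult)
  ultimately show ?thesis
    by (simp add: first_quadrant_def)
qed

lemma power3_cube_root_three_quadrants:
  assumes "z \<noteq> 0"
  shows "(cube_root_three_quadrants z) ^ 3 = z"
proof -
  have "exp (Ln (cis (-3*pi/4) * z) / 3) ^ 3 = cis (-3*pi/4) * z"
    using assms by (simp flip: exp_of_nat_mult)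
  moreover have "cis (pi/4) ^ 3 * cis (-3*pi/4) = 1"
    by (simp only: Complex.DeMoivre cis_mult) simp
  ultimately show ?thesis
    by (simp add: cube_root_three_quadrants_def power_mult_distrib)
qed

lemma cube_root_three_quadrants_power3:
  assumes "z \<in> first_quadrant"
  shows "cube_root_three_quadrants (z ^ 3) = z"
proof -
  define L where "L = Ln z"
  have "z \<noteq> 0"
    using assms by (auto simp: first_quadrant_def)
  then have z: "z = exp L"
    by (simp add: L_def)
  have "0 < Im L" "Im L < pi/2"
    using assms Im_Ln_pos_lt_imp[of z] Re_Ln_pos_lt_imp[of z]
    by (auto simp: first_quadrant_def L_def)
  moreover have "cis (-3*pi/4) * z ^ 3 = exp (3 * L - \<i> * (3*pi/4))"
  proof -
    have "cis (-3*pi/4) = exp (- (\<i> * (3*pi/4)))"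
      by (simp add: cis_conv_exp)
    moreover have "z ^ 3 = exp (3 * L)"
      by (simp add: z flip: exp_of_nat_mult)
    ultimately show ?thesis
      by (simp only: diff_conv_add_uminus exp_add mult.commute)
  qed
  ultimately have "Ln (cis (-3*pi/4) * z ^ 3) = 3 * L - \<i> * (3*pi/4)"
    by simp
  then show ?thesis
    by (simp add: cube_root_three_quadrants_def z cis_conv_exp field_simps flip: exp_add)
qed

lemma cube_root_three_quadrants_has_field_derivative:
  assumes "z \<in> three_quadrants"
  shows "(cube_root_three_quadrants has_field_derivative cube_root_three_quadrants z / (3 * z)) (at z)"
  unfolding cube_root_three_quadrants_def[abs_def]
  using assms three_quadrants_nonzero[OF assms] rotated_three_quadrants_notin_nonpos_Reals[OF assms]
  by (auto intro!: derivative_eq_intros simp: field_simps)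

lemma diffeomorphism_power3_first_quadrant:
  "diffeomorphism_onto first_quadrant three_quadrants (\<lambda>z. z ^ 3)"
proof (rule diffeomorphism_ontoI[where g=cube_root_three_quadrants])
  show "C1_map_on first_quadrant (\<lambda>z. z ^ 3)"
    by (rule C1_map_on_field_derivative[where f'="\<lambda>z. 3 * z^2"])
      (auto intro!: derivative_eq_intros continuous_intros)
  have "continuous_on three_quadrants cube_root_three_quadrants"
    using cube_root_three_quadrants_has_field_derivative
    by (meson DERIV_isCont continuous_at_imp_continuous_on)
  then show "C1_map_on three_quadrants cube_root_three_quadrants"
    by (intro C1_map_on_field_derivative[OF cube_root_three_quadrants_has_field_derivative])
      (auto intro!: continuous_intros dest: three_quadrants_nonzero)
qed (auto simp: open_first_quadrant open_three_quadrants power3_first_quadrant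
       cube_root_three_quadrants_in_first_quadrant power3_cube_root_three_quadrants
       cube_root_three_quadrants_power3 three_quadrants_nonzero)

section \<open>Square roots of the eigenvalues as coordinates on \<open>Omega\<close>\<close>

definition eig_sqrt1 :: "real \<times> real \<Rightarrow> real" where
  "eig_sqrt1 z = sqrt (- fst (r1 z))"

definition eig_sqrt2 :: "real \<times> real \<Rightarrow> real" where
  "eig_sqrt2 z = sqrt (fst (r2 z))"

lemma disc_sqrt_gt_abs:
  assumes "z \<in> Omega"
  shows "\<bar>snd z\<bar> < sqrt ((snd z)^2 + 4 * fst z)"
  using assms real_sqrt_less_mono[of "(snd z)^2" "(snd z)^2 + 4 * fst z"]
  by (simp add: Omega_def)

lemma eig_sqrt_pos:
  assumes "z \<in> Omega"
  shows "0 < eig_sqrt1 z" "0 < eig_sqrt2 z"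
  using disc_sqrt_gt_abs[OF assms] by (auto simp: eig_sqrt1_def eig_sqrt2_def r1_def r2_def)

lemma r1_eq_eig_sqrt1: "z \<in> Omega \<Longrightarrow> r1 z = (- ((eig_sqrt1 z)^2), 1)"
  using disc_sqrt_gt_abs[of z] by (simp add: eig_sqrt1_def r1_def)

lemma r2_eq_eig_sqrt2: "z \<in> Omega \<Longrightarrow> r2 z = ((eig_sqrt2 z)^2, 1)"
  using disc_sqrt_gt_abs[of z] by (simp add: eig_sqrt2_def r2_def)

definition open_quadrant :: "(real \<times> real) set" where
  "open_quadrant = {p. 0 < fst p \<and> 0 < snd p}"

definition eig_sqrts :: "real \<times> real \<Rightarrow> real \<times> real" where
  "eig_sqrts z = (eig_sqrt1 z, eig_sqrt2 z)"

definition eig_param :: "real \<times> real \<Rightarrow> real \<times> real" where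
  "eig_param p = ((fst p)^2 * (snd p)^2, (snd p)^2 - (fst p)^2)"

lemma open_open_quadrant: "open open_quadrant"
  unfolding open_quadrant_def by (intro open_Collect_conj open_Collect_less continuous_intros)

lemma open_Omega: "open Omega"
  unfolding Omega_def by (intro open_Collect_less continuous_intros)

lemma eig_param_eig_sqrts:
  assumes "z \<in> Omega"
  shows "eig_param (eig_sqrts z) = z"
proof -
  define s where "s = sqrt ((snd z)^2 + 4 * fst z)"
  have "s^2 = (snd z)^2 + 4 * fst z"
    using assms by (simp add: s_def Omega_def add_pos_nonneg)
  moreover have a: "(eig_sqrt1 z)^2 = (s - snd z) / 2" and b: "(eig_sqrt2 z)^2 = (s + snd z) / 2"
    using r1_eq_eig_sqrt1[OF assms] r2_eq_eig_sqrt2[OF assms] by (auto simp: r1_def r2_def s_def)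
  ultimately have "(eig_sqrt1 z)^2 * (eig_sqrt2 z)^2 = fst z"
    unfolding a b by (simp add: field_simps power2_eq_square)
  with a b show ?thesis
    by (simp add: eig_param_def eig_sqrts_def prod_eq_iff)
qed

lemma eig_sqrts_eig_param:
  assumes "p \<in> open_quadrant"
  shows "eig_sqrts (eig_param p) = p"
proof -
  obtain a b where p: "p = (a, b)" and pos: "0 < a" "0 < b"
    using assms by (cases p) (auto simp: open_quadrant_def)
  have "(b^2 - a^2)^2 + 4 * (a^2 * b^2) = (a^2 + b^2)^2"
    by (simp add: power2_eq_square algebra_simps)
  then have "sqrt ((b^2 - a^2)^2 + 4 * (a^2 * b^2)) = a^2 + b^2"
    by simp
  then show ?thesis
    using pos by (simp add: p eig_sqrts_def eig_param_def eig_sqrt1_def eig_sqrt2_def r1_def r2_def)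
qed

lemma eig_sqrts_in_open_quadrant: "z \<in> Omega \<Longrightarrow> eig_sqrts z \<in> open_quadrant"
  using eig_sqrt_pos by (simp add: eig_sqrts_def open_quadrant_def)

lemma eig_param_in_Omega: "p \<in> open_quadrant \<Longrightarrow> eig_param p \<in> Omega"
  by (simp add: eig_param_def open_quadrant_def Omega_def)

lemma continuous_on_eig_sqrt1: "continuous_on S eig_sqrt1"
  unfolding eig_sqrt1_def[abs_def] r1_def by (intro continuous_intros) simp

lemma continuous_on_eig_sqrt2: "continuous_on S eig_sqrt2"
  unfolding eig_sqrt2_def[abs_def] r2_def by (intro continuous_intros) simp

lemma has_derivative_eig_param:
  "(eig_param has_derivative
     (\<lambda>d. (2 * a * b^2 * fst d + 2 * a^2 * b * snd d, 2 * b * snd d - 2 * a * fst d))) (at (a, b))"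
  unfolding eig_param_def[abs_def]
  by (auto intro!: derivative_eq_intros simp: fun_eq_iff algebra_simps)

lemma has_derivative_eig_sqrts:
  assumes "z \<in> Omega" and "a = eig_sqrt1 z" and "b = eig_sqrt2 z"
  shows "(eig_sqrts has_derivative
    (\<lambda>h. ((fst h - a^2 * snd h) / (2 * a * (a^2 + b^2)), (fst h + b^2 * snd h) / (2 * b * (a^2 + b^2))))) (at z)"
proof (rule has_derivative_inverse_basic[where f=eig_param and T=Omega])
  show "(eig_param has_derivative
     (\<lambda>d. (2 * a * b^2 * fst d + 2 * a^2 * b * snd d, 2 * b * snd d - 2 * a * fst d))) (at (eig_sqrts z))"
    using has_derivative_eig_param by (simp add: eig_sqrts_def assms(2,3))
  show "continuous (at z) eig_sqrts"
    using continuous_on_eig_sqrt1 continuous_on_eig_sqrt2 continuous_on_eq_continuous_at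
    unfolding eig_sqrts_def[abs_def] by (blast intro: continuous_on_Pair)
  have "0 < a" "0 < b"
    using eig_sqrt_pos assms by auto
  then have "2 * a * (a^2 + b^2) \<noteq> 0" "2 * b * (a^2 + b^2) \<noteq> 0"
    by (simp_all add: add_pos_pos)
  moreover have "2 * a * b^2 * x + 2 * a^2 * b * y - a^2 * (2 * b * y - 2 * a * x) = 2 * a * (a^2 + b^2) * x"
    and "2 * a * b^2 * x + 2 * a^2 * b * y + b^2 * (2 * b * y - 2 * a * x) = 2 * b * (a^2 + b^2) * y"
    for x y :: real
    by (simp_all add: power2_eq_square algebra_simps)
  ultimately show "(\<lambda>h. ((fst h - a^2 * snd h) / (2 * a * (a^2 + b^2)), (fst h + b^2 * snd h) / (2 * b * (a^2 + b^2))))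
      \<circ> (\<lambda>d. (2 * a * b^2 * fst d + 2 * a^2 * b * snd d, 2 * b * snd d - 2 * a * fst d)) = id"
    by (auto simp: fun_eq_iff prod_eq_iff)
  show "bounded_linear (\<lambda>h. ((fst h - a^2 * snd h) / (2 * a * (a^2 + b^2)), (fst h + b^2 * snd h) / (2 * b * (a^2 + b^2))))"
    by (intro bounded_linear_Pair bounded_linear_compose[OF bounded_linear_divide] bounded_linear_intros)
qed (use assms open_Omega eig_param_eig_sqrts in auto)

lemma diffeomorphism_eig_sqrts: "diffeomorphism_onto Omega open_quadrant eig_sqrts"
proof (rule diffeomorphism_ontoI[where g=eig_param])
  let ?D = "\<lambda>z h. ((fst h - (eig_sqrt1 z)^2 * snd h) / (2 * eig_sqrt1 z * ((eig_sqrt1 z)^2 + (eig_sqrt2 z)^2)),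
                     (fst h + (eig_sqrt2 z)^2 * snd h) / (2 * eig_sqrt2 z * ((eig_sqrt1 z)^2 + (eig_sqrt2 z)^2)))"
  have "2 * eig_sqrt1 z * ((eig_sqrt1 z)^2 + (eig_sqrt2 z)^2) \<noteq> 0"
    and "2 * eig_sqrt2 z * ((eig_sqrt1 z)^2 + (eig_sqrt2 z)^2) \<noteq> 0" if "z \<in> Omega" for z
    using eig_sqrt_pos[OF that] by (simp_all add: add_pos_pos)
  then have "continuous_on Omega (\<lambda>z. ?D z i)" for i
    by (intro continuous_intros continuous_on_eig_sqrt1 continuous_on_eig_sqrt2) simp_all
  then show "C1_map_on Omega eig_sqrts"
    using has_derivative_eig_sqrts[OF _ refl refl] by (intro C1_map_onI[where D="?D"])
  show "C1_map_on open_quadrant eig_param"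
    using has_derivative_eig_param
    by (intro C1_map_onI[where D="\<lambda>p d. (2 * fst p * (snd p)^2 * fst d + 2 * (fst p)^2 * snd p * snd d,
                                            2 * snd p * snd d - 2 * fst p * fst d)"])
      (auto intro!: continuous_intros)
qed (auto simp: open_Omega open_open_quadrant eig_sqrts_in_open_quadrant eig_param_in_Omega
       eig_param_eig_sqrts eig_sqrts_eig_param)

section \<open>The Riemann invariants\<close>

definition swap_to_complex :: "real \<times> real \<Rightarrow> complex" where
  "swap_to_complex p = Complex (snd p) (fst p)"

definition Im_Re :: "complex \<Rightarrow> real \<times> real" where
  "Im_Re z = (Im z, Re z)"

lemma bounded_linear_swap_to_complex: "bounded_linear swap_to_complex"
  unfolding linear_conv_bounded_linear[symmetric] linear_iff
  by (simp add: swap_to_complex_def complex_eq_iff)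

lemma bounded_linear_Im_Re: "bounded_linear Im_Re"
  unfolding Im_Re_def[abs_def] by (intro bounded_linear_Pair bounded_linear_Im bounded_linear_Re)

lemma diffeomorphism_swap_to_complex:
  "diffeomorphism_onto open_quadrant first_quadrant swap_to_complex"
proof (rule diffeomorphism_ontoI[where g=Im_Re])
  show "open open_quadrant" "open first_quadrant"
    by (rule open_open_quadrant, rule open_first_quadrant)
  show "C1_map_on open_quadrant swap_to_complex" "C1_map_on first_quadrant Im_Re"
    by (simp_all add: C1_map_on_bounded_linear bounded_linear_swap_to_complex bounded_linear_Im_Re)
qed (auto simp: swap_to_complex_def Im_Re_def open_quadrant_def first_quadrant_def)

lemma diffeomorphism_Im_Re:
  "diffeomorphism_onto three_quadrants {p. 0 < fst p \<or> snd p < 0} Im_Re"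
proof (rule diffeomorphism_ontoI[where g=swap_to_complex])
  show "open {p :: real \<times> real. 0 < fst p \<or> snd p < 0}"
    by (intro open_Collect_disj open_Collect_less continuous_intros)
  show "open three_quadrants"
    by (rule open_three_quadrants)
  show "C1_map_on {p. 0 < fst p \<or> snd p < 0} swap_to_complex" "C1_map_on three_quadrants Im_Re"
    by (simp_all add: C1_map_on_bounded_linear bounded_linear_swap_to_complex bounded_linear_Im_Re)
qed (auto simp: swap_to_complex_def Im_Re_def three_quadrants_def)

definition riemann_invariants :: "real \<times> real \<Rightarrow> real \<times> real" where
  "riemann_invariants = Im_Re \<circ> (\<lambda>c. c ^ 3) \<circ> swap_to_complex \<circ> eig_sqrts"

lemma diffeomorphism_riemann_invariants:
  "diffeomorphism_onto Omega {p. 0 < fst p \<or> snd p < 0} riemann_invariants"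
  unfolding riemann_invariants_def comp_assoc
  by (rule diffeomorphism_onto_compose[OF diffeomorphism_onto_compose[OF diffeomorphism_onto_compose[OF
        diffeomorphism_eig_sqrts diffeomorphism_swap_to_complex] diffeomorphism_power3_first_quadrant]
        diffeomorphism_Im_Re])

lemma riemann_invariants_eq:
  "riemann_invariants =
     (\<lambda>p. (fst p * (3 * (snd p)^2 - (fst p)^2), snd p * ((snd p)^2 - 3 * (fst p)^2))) \<circ> eig_sqrts"
  by (simp add: riemann_invariants_def fun_eq_iff swap_to_complex_def Im_Re_def
      power3_eq_cube power2_eq_square algebra_simps)

lemma has_derivative_riemann_invariants:
  assumes "z \<in> Omega" and "a = eig_sqrt1 z" and "b = eig_sqrt2 z"
  shows "(riemann_invariants has_derivative
    (\<lambda>h. (3 * (fst h + a^2 * snd h) / (2 * a), 3 * (b^2 * snd h - fst h) / (2 * b)))) (at z)"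
proof -
  have "0 < a" "0 < b"
    using eig_sqrt_pos assms by auto
  define s where "s = a^2 + b^2"
  have "0 < s"
    using \<open>0 < a\<close> \<open>0 < b\<close> by (simp add: s_def add_pos_pos)
  have chain_rule_simplified:
    "3 * (b^2 - a^2) * ((x - a^2 * y) / (2 * a * (a^2 + b^2))) + 6 * a * b * ((x + b^2 * y) / (2 * b * (a^2 + b^2)))
      = 3 * (x + a^2 * y) / (2 * a)"
    "3 * (b^2 - a^2) * ((x + b^2 * y) / (2 * b * (a^2 + b^2))) - 6 * a * b * ((x - a^2 * y) / (2 * a * (a^2 + b^2)))
      = 3 * (b^2 * y - x) / (2 * b)" for x y
    using \<open>0 < a\<close> \<open>0 < b\<close> \<open>0 < s\<close> unfolding s_def[symmetric]
    by (simp_all add: field_simps) (simp_all add: s_def algebra_simps power2_eq_square power4_eq_xxxx)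
  have "((\<lambda>p. (fst p * (3 * (snd p)^2 - (fst p)^2), snd p * ((snd p)^2 - 3 * (fst p)^2)))
      has_derivative (\<lambda>d. (3 * (b^2 - a^2) * fst d + 6 * a * b * snd d,
                             3 * (b^2 - a^2) * snd d - 6 * a * b * fst d))) (at (eig_sqrts z))"
    by (auto intro!: derivative_eq_intros simp: eig_sqrts_def assms(2,3) fun_eq_iff algebra_simps power2_eq_square)
  from diff_chain_at[OF has_derivative_eig_sqrts[OF assms] this] show ?thesis
    unfolding riemann_invariants_eq
    by (rule has_derivative_eq_rhs) (simp only: fun_eq_iff o_def fst_conv snd_conv chain_rule_simplified simp_thms)
qed

theorem lemma3p1:
  shows "\<exists>w :: real \<times> real \<Rightarrow> real \<times> real.
           diffeomorphism_onto Omega (w ` Omega) w \<and>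
           (\<forall>z\<in>Omega. \<exists>W. (w has_derivative W) (at z) \<and>
               fst (W (r1 z)) = 0 \<and> snd (W (r2 z)) = 0 \<and>
               fst (W (1, 0)) > 0 \<and> snd (W (1, 0)) < 0)"
proof (rule exI[of _ riemann_invariants], intro conjI ballI)
  show "diffeomorphism_onto Omega (riemann_invariants ` Omega) riemann_invariants"
    using diffeomorphism_riemann_invariants by (rule diffeomorphism_onto_image)
next
  fix z assume z: "z \<in> Omega"
  define a b where "a = eig_sqrt1 z" and "b = eig_sqrt2 z"
  have "0 < a" "0 < b"
    using eig_sqrt_pos[OF z] by (simp_all add: a_def b_def)
  then show "\<exists>W. (riemann_invariants has_derivative W) (at z) \<and>
      fst (W (r1 z)) = 0 \<and> snd (W (r2 z)) = 0 \<and> fst (W (1, 0)) > 0 \<and> snd (W (1, 0)) < 0"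
    using has_derivative_riemann_invariants[OF z a_def b_def]
      r1_eq_eig_sqrt1[OF z] r2_eq_eig_sqrt2[OF z]
    by (intro exI conjI) (auto simp: a_def[symmetric] b_def[symmetric])
qed

end
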